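(* Let $(\mathcal{B}_n)_{n\in\mathbb{N}}$ be a countable inverse system of complete topological rings with continuous surjective transition homomorphisms $p_{m,n}\colon\mathcal{B}_m\to\mathcal{B}_n$ for $m\ge n\ge0$, let $\mathcal{B}=\varprojlim_n\mathcal{B}_n$ with the inverse limit topology and let $p_n\colon\mathcal{B}\to\mathcal{B}_n$ be the canonical projections. Let $\mathrm{e}_n\colon\mathcal{B}_n\to\mathcal{B}_n\{T\}$, $n\in\mathbb{N}$, be restricted exponential homomorphisms such that $\mathrm{e}_n\circ p_{m,n}=(p_{m,n}\widehat{\otimes}\mathrm{id}_{\mathbb{Z}[T]})\circ\mathrm{e}_m$ for all $m\ge n\ge0$. Then there exists a unique restricted exponential homomorphism $\underline{\mathrm{e}}=\varprojlim_n\mathrm{e}_n\colon\mathcal{B}\to\mathcal{B}\{T\}$ such that $\mathrm{e}_n\circ p_n=(p_n\widehat{\otimes}\mathrm{id}_{\mathbb{Z}[T]})\circ\underline{\mathrm{e}}$ for every $n\in\mathbb{N}$.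
   Context: Conventions: topological rings are linearly topologized with a countable fundamental system of open ideals; homomorphisms are continuous; complete means the canonical map to $\varprojlim_{\mathfrak{a}}\mathcal{B}/\mathfrak{a}$ (open ideals, discrete quotients) is a topological isomorphism. For complete $\mathcal{C}$, $\mathcal{C}\{T\}$, $\mathcal{C}\{T,T'\}$ denote restricted power series (coefficients converging to $0$), topologized by the ideals of series with all coefficients in a given open ideal. For a continuous ring homomorphism $p\colon\mathcal{C}\to\mathcal{C}'$, $p\widehat{\otimes}\mathrm{id}_{\mathbb{Z}[T]}\colon\mathcal{C}\{T\}\to\mathcal{C}'\{T\}$ is $\sum c_iT^i\mapsto\sum p(c_i)T^i$. A restricted exponential homomorphism of a complete ring $\mathcal{C}$ is a continuous ring homomorphism $\mathrm{e}\colon\mathcal{C}\to\mathcal{C}\{T\}$, $\mathrm{e}(c)=\sum_i\mathrm{e}_i(c)T^i$, with $\mathrm{e}_0=\mathrm{id}$ and $\sum_{i,j}\mathrm{e}_j(\mathrm{e}_i(c))T'^jT^i=\sum_\ell\mathrm{e}_\ell(c)(T+T')^\ell$ for all $c$. *)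

theory Defs
  imports "HOL-Algebra.Ideal"
begin

text \<open>A linearly topologized ring with a countable fundamental system of open ideals,
  given (w.l.o.g.) as a decreasing sequence of ideals I 0, I 1, ...\<close>
definition lin_top :: "('a, 'm) ring_scheme \<Rightarrow> (nat \<Rightarrow> 'a set) \<Rightarrow> bool" where
  "lin_top R I \<longleftrightarrow> (\<forall>k. ideal (I k) R) \<and> (\<forall>k. I (Suc k) \<subseteq> I k)"

text \<open>Completeness: the canonical map R to the inverse limit of the R / I k is bijective.
  An element of that inverse limit is represented by a sequence x with x (k+1) - x k in I k;
  its preimage is an element y with y - x k in I k for all k.\<close>
definition complete_lt :: "('a, 'm) ring_scheme \<Rightarrow> (nat \<Rightarrow> 'a set) \<Rightarrow> bool" where
  "complete_lt R I \<longleftrightarrow> lin_top R I \<and>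
     (\<forall>x. (\<forall>k. x k \<in> carrier R) \<and> (\<forall>k. x (Suc k) \<ominus>\<^bsub>R\<^esub> x k \<in> I k) \<longrightarrow>
          (\<exists>!y. y \<in> carrier R \<and> (\<forall>k. y \<ominus>\<^bsub>R\<^esub> x k \<in> I k)))"

definition cont_hom :: "('a, 'm) ring_scheme \<Rightarrow> (nat \<Rightarrow> 'a set) \<Rightarrow>
    ('b, 'n) ring_scheme \<Rightarrow> (nat \<Rightarrow> 'b set) \<Rightarrow> ('a \<Rightarrow> 'b) \<Rightarrow> bool" where
  "cont_hom R I S J f \<longleftrightarrow> f \<in> ring_hom R S \<and> (\<forall>k. \<exists>l. f ` I l \<subseteq> J k)"

text \<open>The ring C{T} of restricted power series (coefficient sequences tending to 0).\<close>
definition rps :: "('a, 'm) ring_scheme \<Rightarrow> (nat \<Rightarrow> 'a set) \<Rightarrow> (nat \<Rightarrow> 'a) ring" where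
  "rps R I = \<lparr> carrier = {f. (\<forall>i. f i \<in> carrier R) \<and> (\<forall>k. \<exists>N. \<forall>i\<ge>N. f i \<in> I k)},
              mult = (\<lambda>f g i. \<Oplus>\<^bsub>R\<^esub> j\<in>{..i}. f j \<otimes>\<^bsub>R\<^esub> g (i - j)),
              one = (\<lambda>i. if i = 0 then \<one>\<^bsub>R\<^esub> else \<zero>\<^bsub>R\<^esub>),
              zero = (\<lambda>i. \<zero>\<^bsub>R\<^esub>),
              add = (\<lambda>f g i. f i \<oplus>\<^bsub>R\<^esub> g i) \<rparr>"

definition rps_ideals :: "('a, 'm) ring_scheme \<Rightarrow> (nat \<Rightarrow> 'a set) \<Rightarrow> nat \<Rightarrow> (nat \<Rightarrow> 'a) set" where
  "rps_ideals R I k = {f \<in> carrier (rps R I). \<forall>i. f i \<in> I k}"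

text \<open>Restricted exponential homomorphism e : C \<rightarrow> C{T}, e c = \<Sum> e c i T^i.
  The identity \<Sum>_{i,j} e_j(e_i c) T'^j T^i = \<Sum>_l e_l(c) (T+T')^l in C{T,T'} is stated by
  comparing the coefficients of T^i T'^j: e_j(e_i c) = binom(i+j,i) e_{i+j}(c).\<close>
definition restricted_exp :: "('a, 'm) ring_scheme \<Rightarrow> (nat \<Rightarrow> 'a set) \<Rightarrow> ('a \<Rightarrow> nat \<Rightarrow> 'a) \<Rightarrow> bool" where
  "restricted_exp R I e \<longleftrightarrow> cont_hom R I (rps R I) (rps_ideals R I) e \<and>
     (\<forall>c\<in>carrier R. e c 0 = c) \<and>
     (\<forall>c\<in>carrier R. \<forall>i j. e (e c i) j = [((i + j) choose i)] \<cdot>\<^bsub>R\<^esub> e c (i + j))"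

definition inv_lim_ring :: "(nat \<Rightarrow> ('a, 'm) ring_scheme) \<Rightarrow> (nat \<Rightarrow> nat \<Rightarrow> 'a \<Rightarrow> 'a) \<Rightarrow> (nat \<Rightarrow> 'a) ring" where
  "inv_lim_ring B p = \<lparr> carrier = {x. (\<forall>n. x n \<in> carrier (B n)) \<and> (\<forall>m n. n \<le> m \<longrightarrow> p m n (x m) = x n)},
              mult = (\<lambda>x y n. x n \<otimes>\<^bsub>B n\<^esub> y n),
              one = (\<lambda>n. \<one>\<^bsub>B n\<^esub>),
              zero = (\<lambda>n. \<zero>\<^bsub>B n\<^esub>),
              add = (\<lambda>x y n. x n \<oplus>\<^bsub>B n\<^esub> y n) \<rparr>"

text \<open>Inverse limit topology: fundamental system of open ideals
  (intersection of the preimages of I n k, n \<le> k).\<close>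
definition inv_lim_ideals :: "(nat \<Rightarrow> ('a, 'm) ring_scheme) \<Rightarrow> (nat \<Rightarrow> nat \<Rightarrow> 'a set) \<Rightarrow>
    (nat \<Rightarrow> nat \<Rightarrow> 'a \<Rightarrow> 'a) \<Rightarrow> nat \<Rightarrow> (nat \<Rightarrow> 'a) set" where
  "inv_lim_ideals B I p k = {x \<in> carrier (inv_lim_ring B p). \<forall>n\<le>k. x n \<in> I n k}"

end

theory Submission
  imports Defs
begin

text \<open>The compatibility with the projections forces the limit exponential to be
  componentwise: the T^i-coefficient of its value at x must be the sequence (e n (x n) i),
  which lies in the inverse limit because the e n commute with the transition maps. As the
  ring structure and the open ideals of the limit are componentwise, and an open ideal of
  the limit only constrains finitely many components, every axiom of a restricted
  exponential homomorphism is inherited from the e n.\<close>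

lemma inv_lim_ring_simps [simp]:
  "x \<in> carrier (inv_lim_ring B p) \<longleftrightarrow>
     (\<forall>n. x n \<in> carrier (B n)) \<and> (\<forall>m n. n \<le> m \<longrightarrow> p m n (x m) = x n)"
  "x \<oplus>\<^bsub>inv_lim_ring B p\<^esub> y = (\<lambda>n. x n \<oplus>\<^bsub>B n\<^esub> y n)"
  "x \<otimes>\<^bsub>inv_lim_ring B p\<^esub> y = (\<lambda>n. x n \<otimes>\<^bsub>B n\<^esub> y n)"
  "\<zero>\<^bsub>inv_lim_ring B p\<^esub> = (\<lambda>n. \<zero>\<^bsub>B n\<^esub>)"
  "\<one>\<^bsub>inv_lim_ring B p\<^esub> = (\<lambda>n. \<one>\<^bsub>B n\<^esub>)"
  by (simp_all add: inv_lim_ring_def)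

lemma add_pow_inv_lim_ring:
  fixes k :: nat
  shows "([k] \<cdot>\<^bsub>inv_lim_ring B p\<^esub> x) n = [k] \<cdot>\<^bsub>B n\<^esub> x n"
  by (induction k) (simp_all add: add_pow_def)

lemma lin_top_antimono:
  assumes "lin_top R I" and "k \<le> l"
  shows "I l \<subseteq> I k"
  using assms lift_Suc_antimono_le[of I] unfolding lin_top_def by blast

locale ring_inverse_system =
  fixes B :: "nat \<Rightarrow> ('a, 'm) ring_scheme" and p :: "nat \<Rightarrow> nat \<Rightarrow> 'a \<Rightarrow> 'a"
  assumes ring: "ring (B n)"
    and trans_ring_hom: "n \<le> m \<Longrightarrow> p m n \<in> ring_hom (B m) (B n)"
begin

lemma abelian_monoid_inv_lim_ring: "abelian_monoid (inv_lim_ring B p)"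
proof (rule abelian_monoidI)
  fix x y assume "x \<in> carrier (inv_lim_ring B p)" "y \<in> carrier (inv_lim_ring B p)"
  then show "x \<oplus>\<^bsub>inv_lim_ring B p\<^esub> y \<in> carrier (inv_lim_ring B p)"
    using ring_hom_add[OF trans_ring_hom] by (simp add: ring.ring_simprules(1)[OF ring])
next
  show "\<zero>\<^bsub>inv_lim_ring B p\<^esub> \<in> carrier (inv_lim_ring B p)"
    using ring_hom_zero[OF trans_ring_hom ring ring] by (simp add: ring.ring_simprules(2)[OF ring])
qed (auto simp: ring.ring_simprules(7,8,10)[OF ring])

lemma finsum_inv_lim_ring:
  assumes "finite A" and "f \<in> A \<rightarrow> carrier (inv_lim_ring B p)"
  shows "(\<Oplus>\<^bsub>inv_lim_ring B p\<^esub> j\<in>A. f j) n = (\<Oplus>\<^bsub>B n\<^esub> j\<in>A. f j n)"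
  using assms
proof (induction A rule: finite_induct)
  case empty
  then show ?case
    by (simp add: abelian_monoid.finsum_empty[OF abelian_monoid_inv_lim_ring]
        abelian_monoid.finsum_empty[OF abelian_group.axioms(1)[OF ring.is_abelian_group[OF ring]]])
next
  case (insert a A)
  then have "(\<lambda>j. f j n) \<in> A \<rightarrow> carrier (B n)" "f a n \<in> carrier (B n)"
    by (auto simp: Pi_iff)
  then show ?case
    using insert abelian_monoid.finsum_insert[OF abelian_monoid_inv_lim_ring insert.hyps]
      abelian_monoid.finsum_insert[OF abelian_group.axioms(1)[OF ring.is_abelian_group[OF ring]] insert.hyps]
    by auto
qed

end

definition inv_lim_exp :: "(nat \<Rightarrow> 'a \<Rightarrow> nat \<Rightarrow> 'a) \<Rightarrow> (nat \<Rightarrow> 'a) \<Rightarrow> nat \<Rightarrow> nat \<Rightarrow> 'a" where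
  "inv_lim_exp e x i n = e n (x n) i"

locale exp_inverse_system = ring_inverse_system B p
  for B :: "nat \<Rightarrow> ('a, 'm) ring_scheme" and p +
  fixes I :: "nat \<Rightarrow> nat \<Rightarrow> 'a set" and e :: "nat \<Rightarrow> 'a \<Rightarrow> nat \<Rightarrow> 'a"
  assumes lin_top: "lin_top (B n) (I n)"
    and exp: "restricted_exp (B n) (I n) (e n)"
    and exp_compat: "n \<le> m \<Longrightarrow> x \<in> carrier (B m) \<Longrightarrow> e n (p m n x) = (\<lambda>i. p m n (e m x i))"
begin

lemma exp_ring_hom: "e n \<in> ring_hom (B n) (rps (B n) (I n))"
  using exp unfolding restricted_exp_def cont_hom_def by blast

lemma exp_in_rps: "c \<in> carrier (B n) \<Longrightarrow> e n c \<in> carrier (rps (B n) (I n))"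
  using ring_hom_closed[OF exp_ring_hom] .

lemma exp_coeff_closed: "c \<in> carrier (B n) \<Longrightarrow> e n c i \<in> carrier (B n)"
  using exp_in_rps by (simp add: rps_def)

lemma inv_lim_exp_coeff_closed:
  assumes "x \<in> carrier (inv_lim_ring B p)"
  shows "inv_lim_exp e x i \<in> carrier (inv_lim_ring B p)"
  using assms exp_compat exp_coeff_closed by (simp add: inv_lim_exp_def) metis

lemma inv_lim_exp_in_rps:
  assumes x: "x \<in> carrier (inv_lim_ring B p)"
  shows "inv_lim_exp e x \<in> carrier (rps (inv_lim_ring B p) (inv_lim_ideals B I p))"
proof -
  have "\<exists>N. \<forall>i\<ge>N. inv_lim_exp e x i \<in> inv_lim_ideals B I p k" for k
  proof -
    have "\<exists>N. \<forall>i\<ge>N. e n (x n) i \<in> I n k" for n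
      using exp_in_rps[of "x n" n] x by (simp add: rps_def)
    then obtain N where N: "\<And>n i. N n \<le> i \<Longrightarrow> e n (x n) i \<in> I n k"
      by metis
    have "inv_lim_exp e x i \<in> inv_lim_ideals B I p k" if "Max (N ` {..k}) \<le> i" for i
      using that N inv_lim_exp_coeff_closed[OF x]
      by (force simp: inv_lim_ideals_def inv_lim_exp_def)
    then show ?thesis by blast
  qed
  then show ?thesis
    using inv_lim_exp_coeff_closed[OF x] by (simp add: rps_def)
qed

lemma inv_lim_exp_ring_hom:
  "inv_lim_exp e \<in> ring_hom (inv_lim_ring B p) (rps (inv_lim_ring B p) (inv_lim_ideals B I p))"
proof (rule ring_hom_memI)
  fix x y
  assume x: "x \<in> carrier (inv_lim_ring B p)" and y: "y \<in> carrier (inv_lim_ring B p)"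
  have xy: "x n \<in> carrier (B n)" "y n \<in> carrier (B n)" for n
    using x y by auto
  have products_closed:
    "(\<lambda>j. inv_lim_exp e x j \<otimes>\<^bsub>inv_lim_ring B p\<^esub> inv_lim_exp e y (i - j))
       \<in> {..i} \<rightarrow> carrier (inv_lim_ring B p)" for i
    using inv_lim_exp_coeff_closed[OF x] inv_lim_exp_coeff_closed[OF y] ring_hom_mult[OF trans_ring_hom]
    by (simp add: ring.ring_simprules(5)[OF ring])
  show "inv_lim_exp e (x \<otimes>\<^bsub>inv_lim_ring B p\<^esub> y) =
      inv_lim_exp e x \<otimes>\<^bsub>rps (inv_lim_ring B p) (inv_lim_ideals B I p)\<^esub> inv_lim_exp e y"
  proof (intro ext)
    fix i n
    have "(\<Oplus>\<^bsub>inv_lim_ring B p\<^esub> j\<in>{..i}.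
            inv_lim_exp e x j \<otimes>\<^bsub>inv_lim_ring B p\<^esub> inv_lim_exp e y (i - j)) n =
          (\<Oplus>\<^bsub>B n\<^esub> j\<in>{..i}. e n (x n) j \<otimes>\<^bsub>B n\<^esub> e n (y n) (i - j))"
      using finsum_inv_lim_ring[OF _ products_closed] by (simp add: inv_lim_exp_def)
    then show "inv_lim_exp e (x \<otimes>\<^bsub>inv_lim_ring B p\<^esub> y) i n =
        (inv_lim_exp e x \<otimes>\<^bsub>rps (inv_lim_ring B p) (inv_lim_ideals B I p)\<^esub> inv_lim_exp e y) i n"
      using ring_hom_mult[OF exp_ring_hom xy] by (simp add: rps_def inv_lim_exp_def)
  qed
  show "inv_lim_exp e (x \<oplus>\<^bsub>inv_lim_ring B p\<^esub> y) =
      inv_lim_exp e x \<oplus>\<^bsub>rps (inv_lim_ring B p) (inv_lim_ideals B I p)\<^esub> inv_lim_exp e y"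
    using ring_hom_add[OF exp_ring_hom xy] by (intro ext) (simp add: rps_def inv_lim_exp_def)
next
  show "inv_lim_exp e \<one>\<^bsub>inv_lim_ring B p\<^esub> = \<one>\<^bsub>rps (inv_lim_ring B p) (inv_lim_ideals B I p)\<^esub>"
    using ring_hom_one[OF exp_ring_hom] by (intro ext) (simp add: rps_def inv_lim_exp_def)
qed (rule inv_lim_exp_in_rps)

lemma inv_lim_exp_continuous:
  "\<exists>l. inv_lim_exp e ` inv_lim_ideals B I p l
         \<subseteq> rps_ideals (inv_lim_ring B p) (inv_lim_ideals B I p) k"
proof -
  have "\<exists>l. e n ` I n l \<subseteq> rps_ideals (B n) (I n) k" for n
    using exp unfolding restricted_exp_def cont_hom_def by blast
  then obtain l where l: "\<And>n. e n ` I n (l n) \<subseteq> rps_ideals (B n) (I n) k"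
    by metis
  define M where "M = max k (Max (l ` {..k}))"
  have "inv_lim_exp e x \<in> rps_ideals (inv_lim_ring B p) (inv_lim_ideals B I p) k"
    if xM: "x \<in> inv_lim_ideals B I p M" for x
  proof -
    have x: "x \<in> carrier (inv_lim_ring B p)"
      using xM unfolding inv_lim_ideals_def by blast
    have "e n (x n) i \<in> I n k" if "n \<le> k" for n i
    proof -
      have "l n \<le> M" "n \<le> M"
        using that unfolding M_def by (auto intro: le_trans[OF _ max.cobounded2])
      then have "x n \<in> I n (l n)"
        using xM lin_top_antimono[OF lin_top] unfolding inv_lim_ideals_def by blast
      then show ?thesis
        using l unfolding rps_ideals_def by blast
    qed
    then show ?thesis
      using inv_lim_exp_in_rps[OF x] inv_lim_exp_coeff_closed[OF x]
      by (simp add: rps_ideals_def inv_lim_ideals_def inv_lim_exp_def)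
  qed
  then show ?thesis by blast
qed

lemma restricted_exp_inv_lim_exp:
  "restricted_exp (inv_lim_ring B p) (inv_lim_ideals B I p) (inv_lim_exp e)"
  unfolding restricted_exp_def cont_hom_def
proof (intro conjI ballI allI inv_lim_exp_ring_hom inv_lim_exp_continuous)
  fix c assume "c \<in> carrier (inv_lim_ring B p)"
  then have c: "c n \<in> carrier (B n)" for n
    by simp
  show "inv_lim_exp e c 0 = c"
    using exp c unfolding restricted_exp_def by (simp add: inv_lim_exp_def fun_eq_iff)
  fix i j
  show "inv_lim_exp e (inv_lim_exp e c i) j =
      [((i + j) choose i)] \<cdot>\<^bsub>inv_lim_ring B p\<^esub> inv_lim_exp e c (i + j)"
    using exp c unfolding restricted_exp_def by (simp add: inv_lim_exp_def add_pow_inv_lim_ring fun_eq_iff)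
qed

end

theorem proposition2p9:
  fixes B :: "nat \<Rightarrow> ('a, 'm) ring_scheme"
    and I :: "nat \<Rightarrow> nat \<Rightarrow> 'a set"
    and p :: "nat \<Rightarrow> nat \<Rightarrow> 'a \<Rightarrow> 'a"
    and e :: "nat \<Rightarrow> 'a \<Rightarrow> nat \<Rightarrow> 'a"
  assumes rings: "\<And>n. cring (B n)"
    and complete: "\<And>n. complete_lt (B n) (I n)"
    and trans_hom: "\<And>m n. n \<le> m \<Longrightarrow> cont_hom (B m) (I m) (B n) (I n) (p m n)"
    and trans_surj: "\<And>m n. n \<le> m \<Longrightarrow> p m n ` carrier (B m) = carrier (B n)"
    and trans_id: "\<And>n x. x \<in> carrier (B n) \<Longrightarrow> p n n x = x"
    and trans_comp: "\<And>l m n x. n \<le> m \<Longrightarrow> m \<le> l \<Longrightarrow> x \<in> carrier (B l) \<Longrightarrow>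
                       p m n (p l m x) = p l n x"
    and exps: "\<And>n. restricted_exp (B n) (I n) (e n)"
    and compat: "\<And>m n x. n \<le> m \<Longrightarrow> x \<in> carrier (B m) \<Longrightarrow>
                   e n (p m n x) = (\<lambda>i. p m n (e m x i))"
  shows "\<exists>E. restricted_exp (inv_lim_ring B p) (inv_lim_ideals B I p) E \<and>
             (\<forall>n. \<forall>x\<in>carrier (inv_lim_ring B p). e n (x n) = (\<lambda>i. E x i n)) \<and>
             (\<forall>E'. restricted_exp (inv_lim_ring B p) (inv_lim_ideals B I p) E' \<and>
                   (\<forall>n. \<forall>x\<in>carrier (inv_lim_ring B p). e n (x n) = (\<lambda>i. E' x i n)) \<longrightarrow>
                   (\<forall>x\<in>carrier (inv_lim_ring B p). E' x = E x))"
proof -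
  interpret exp_inverse_system B p I e
  proof (intro exp_inverse_system.intro ring_inverse_system.intro exp_inverse_system_axioms.intro)
    show "ring (B n)" for n
      using rings cring.axioms(1) by blast
    show "p m n \<in> ring_hom (B m) (B n)" if "n \<le> m" for m n
      using trans_hom[OF that] unfolding cont_hom_def by blast
    show "lin_top (B n) (I n)" for n
      using complete unfolding complete_lt_def by blast
  qed (fact exps compat)+
  show ?thesis
  proof (intro exI[of _ "inv_lim_exp e"] conjI allI ballI impI restricted_exp_inv_lim_exp)
    show "e n (x n) = (\<lambda>i. inv_lim_exp e x i n)" for n x
      by (simp add: inv_lim_exp_def)
    show "E' x = inv_lim_exp e x"
      if "restricted_exp (inv_lim_ring B p) (inv_lim_ideals B I p) E' \<and>
          (\<forall>n. \<forall>x\<in>carrier (inv_lim_ring B p). e n (x n) = (\<lambda>i. E' x i n))"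
        and "x \<in> carrier (inv_lim_ring B p)" for E' x
      using that by (auto simp: inv_lim_exp_def fun_eq_iff)
  qed
qed

end
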